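(* Let $d\ge1$, $z\ge0$, let $0<\varphi_1\le\cdots\le\varphi_d$ and let $\tilde v_1,\ldots,\tilde v_d\in\mathbb C$ be nonzero; set $\varphi_0=z$ and $\varphi_{d+1}=+\infty$. For $\lambda>0$ with $\lambda\notin\{\varphi_1,\dots,\varphi_d\}$ define $$f(\lambda)=\lambda^2\sum_{m=1}^d\frac{\varphi_m|\tilde v_m|^2}{(\lambda-\varphi_m)^2}-\lambda+z,\qquad g(\lambda)=1-\sum_{m=1}^d\frac{\varphi_m|\tilde v_m|^2}{\lambda-\varphi_m}-\frac{z}{\lambda}-\log\lambda.$$ Let $L\in\{1,\ldots,d\}$ and $K\in\{0,\ldots,d-L\}$, and let $\lambda_1\in(\varphi_{L-1},\varphi_L)$ and $\lambda_2\in(\varphi_{L+K},\varphi_{L+K+1})$ satisfy $f(\lambda_1)=f(\lambda_2)=0$. Then $g(\lambda_1)\ge g(\lambda_2)$.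
   Context: Standing assumption of the paper for this lemma: all indices belong to the support $\mathcal S=\{m:\varphi_m|\tilde v_m|^2\ne0\}$, i.e. $\mathcal S=\{1,\ldots,d\}$. Here $\varphi_m$ are the eigenvalues of a Hermitian positive semi-definite matrix and $\tilde v_m$ the coordinates of a vector in its eigenbasis (this interpretation is not needed for the statement). *)

theory Defs
  imports Complex_Main
begin

definition f_fun :: "nat \<Rightarrow> (nat \<Rightarrow> real) \<Rightarrow> (nat \<Rightarrow> complex) \<Rightarrow> real \<Rightarrow> real \<Rightarrow> real" where
  "f_fun d phi v z lam =
     lam^2 * (\<Sum>m=1..d. phi m * (cmod (v m))^2 / (lam - phi m)^2) - lam + z"

definition g_fun :: "nat \<Rightarrow> (nat \<Rightarrow> real) \<Rightarrow> (nat \<Rightarrow> complex) \<Rightarrow> real \<Rightarrow> real \<Rightarrow> real" where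
  "g_fun d phi v z lam =
     1 - (\<Sum>m=1..d. phi m * (cmod (v m))^2 / (lam - phi m)) - z / lam - ln lam"

text \<open>Extended eigenvalue sequence with phi_0 = z (phi_(d+1) = +infinity is handled
  by omitting the upper bound).\<close>
definition phi_ext :: "real \<Rightarrow> (nat \<Rightarrow> real) \<Rightarrow> nat \<Rightarrow> real" where
  "phi_ext z phi m = (if m = 0 then z else phi m)"

end

theory Submission
  imports Defs
begin

text \<open>Write \<open>a\<^sub>m = \<phi>\<^sub>m |v\<^sub>m|\<^sup>2 \<ge> 0\<close>. Since \<open>g(\<lambda>\<^sub>1) - g(\<lambda>\<^sub>2)\<close> contains
  \<open>\<Sum> a\<^sub>m (1/(\<lambda>\<^sub>1 - \<phi>\<^sub>m) - 1/(\<lambda>\<^sub>2 - \<phi>\<^sub>m))\<close>, each such difference is bounded by a combination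
  of \<open>1/(\<lambda>\<^sub>1 - \<phi>\<^sub>m)\<^sup>2\<close> and \<open>1/(\<lambda>\<^sub>2 - \<phi>\<^sub>m)\<^sup>2\<close> whose weights are chosen so that, after
  summation, the equations \<open>f(\<lambda>\<^sub>i) = 0\<close> evaluate the squared sums exactly. All terms in
  \<open>z\<close> then cancel and what remains is \<open>2(\<lambda>\<^sub>2 - \<lambda>\<^sub>1)/(\<lambda>\<^sub>1 + \<lambda>\<^sub>2) \<le> ln \<lambda>\<^sub>2 - ln \<lambda>\<^sub>1\<close>,
  the logarithmic-arithmetic mean inequality. The interlacing hypotheses only serve to
  guarantee \<open>0 < \<lambda>\<^sub>1 < \<lambda>\<^sub>2\<close>.\<close>

lemma two_diff_div_add_le_ln_diff:
  fixes x y :: real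
  assumes "0 < x" "x \<le> y"
  shows "2 * (y - x) / (x + y) \<le> ln y - ln x"
proof -
  let ?h = "\<lambda>t. ln t - 2 * (t - x) / (t + x)"
  have "(?h has_real_derivative 1 / t - 4 * x / (t + x)\<^sup>2) (at t)" if "x \<le> t" for t
    using that assms
    by (auto intro!: derivative_eq_intros simp: power2_eq_square algebra_simps add_divide_distrib)
  moreover have "0 \<le> 1 / t - 4 * x / (t + x)\<^sup>2" if "x \<le> t" for t
  proof -
    have "4 * x * t \<le> (t + x)\<^sup>2"
      using sum_squares_ge_zero[of "t - x" 0] by (simp add: power2_eq_square algebra_simps)
    then show ?thesis using that assms by (simp add: field_simps)
  qed
  ultimately have "?h x \<le> ?h y"
    by (intro DERIV_nonneg_imp_nondecreasing[OF assms(2)]) blast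
  then show ?thesis by (simp add: add.commute)
qed

text \<open>No hypothesis \<open>p \<notin> {x, y}\<close> is needed: there the junk value \<open>1/0 = 0\<close> makes the
  left-hand side \<open>1/(x - y) < 0\<close>.\<close>

lemma inverse_diff_le_weighted_inverse_squares:
  fixes p x y :: real
  assumes "0 \<le> p" "0 < x" "x < y"
  shows "1 / (x - p) - 1 / (y - p) \<le> (y - x) / (x + y) * (x / (x - p)\<^sup>2 + y / (y - p)\<^sup>2)"
proof (cases "p = x \<or> p = y")
  case True
  then have "1 / (x - p) - 1 / (y - p) < 0" using assms by auto
  moreover have "0 \<le> (y - x) / (x + y) * (x / (x - p)\<^sup>2 + y / (y - p)\<^sup>2)"
    using assms by simp
  ultimately show ?thesis by linarith
next
  case False
  have combined: "(w - u) / s * (x / u\<^sup>2 + y / w\<^sup>2) - (1 / u - 1 / w)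
      = (w - u) * (x * w\<^sup>2 + y * u\<^sup>2 - s * u * w) / (s * u\<^sup>2 * w\<^sup>2)"
    if "u \<noteq> 0" "w \<noteq> 0" "s \<noteq> 0" for s u w
    using that by (simp add: field_simps power2_eq_square)
  have numerator: "x * (y - p)\<^sup>2 + y * (x - p)\<^sup>2 - (x + y) * (x - p) * (y - p) = (y - x)\<^sup>2 * p"
    by (simp add: power2_eq_square algebra_simps)
  have "(y - x) / (x + y) * (x / (x - p)\<^sup>2 + y / (y - p)\<^sup>2) - (1 / (x - p) - 1 / (y - p))
      = (y - x) * ((y - x)\<^sup>2 * p) / ((x + y) * (x - p)\<^sup>2 * (y - p)\<^sup>2)"
    using combined[of "x - p" "y - p" "x + y"] numerator False assms by simp
  moreover have "0 \<le> (y - x) * ((y - x)\<^sup>2 * p) / ((x + y) * (x - p)\<^sup>2 * (y - p)\<^sup>2)"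
    using assms by simp
  ultimately show ?thesis by linarith
qed

lemma f_fun_root_weighted_sum:
  assumes "f_fun d phi v z l = 0" "l \<noteq> 0"
  shows "l * (\<Sum>m=1..d. phi m * (cmod (v m))\<^sup>2 / (l - phi m)\<^sup>2) = 1 - z / l"
  using assms by (simp add: f_fun_def field_simps power2_eq_square)

lemma g_fun_antimono_on_f_fun_roots:
  assumes "\<forall>m\<in>{1..d}. 0 \<le> phi m" "0 < l1" "l1 < l2"
    and "f_fun d phi v z l1 = 0" "f_fun d phi v z l2 = 0"
  shows "g_fun d phi v z l2 \<le> g_fun d phi v z l1"
proof -
  define a where "a m = phi m * (cmod (v m))\<^sup>2" for m
  define S where "S l = (\<Sum>m=1..d. a m / (l - phi m)\<^sup>2)" for l
  have "(\<Sum>m=1..d. a m / (l1 - phi m)) - (\<Sum>m=1..d. a m / (l2 - phi m))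
      = (\<Sum>m=1..d. a m * (1 / (l1 - phi m) - 1 / (l2 - phi m)))"
    by (simp add: sum_subtractf right_diff_distrib)
  also have "\<dots> \<le> (\<Sum>m=1..d. a m * ((l2 - l1) / (l1 + l2)
                   * (l1 / (l1 - phi m)\<^sup>2 + l2 / (l2 - phi m)\<^sup>2)))"
    using assms(1-3)
    by (intro sum_mono mult_left_mono inverse_diff_le_weighted_inverse_squares)
       (auto simp: a_def)
  also have "\<dots> = (l2 - l1) / (l1 + l2) * (l1 * S l1 + l2 * S l2)"
    unfolding S_def by (simp add: sum_distrib_left sum.distrib algebra_simps)
  also have "\<dots> = (l2 - l1) / (l1 + l2) * (2 - z / l1 - z / l2)"
    using f_fun_root_weighted_sum[OF assms(4)] f_fun_root_weighted_sum[OF assms(5)] assms(2,3)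
    by (simp add: S_def a_def)
  also have "\<dots> = 2 * (l2 - l1) / (l1 + l2) - (z / l1 - z / l2)"
    using assms(2,3) by (simp add: field_simps)
  also have "\<dots> \<le> ln l2 - ln l1 - (z / l1 - z / l2)"
    using two_diff_div_add_le_ln_diff[of l1 l2] assms(2,3) by simp
  finally show ?thesis by (simp add: g_fun_def a_def)
qed

theorem lemma5:
  fixes d L K :: nat and z l1 l2 :: real
    and phi :: "nat \<Rightarrow> real" and v :: "nat \<Rightarrow> complex"
  assumes "d \<ge> 1" and "z \<ge> 0" and "0 < phi 1"
    and "\<forall>m. 1 \<le> m \<and> m < d \<longrightarrow> phi m \<le> phi (Suc m)"
    and "\<forall>m\<in>{1..d}. v m \<noteq> 0"
    and "1 \<le> L" and "L \<le> d" and "K \<le> d - L"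
    and "phi_ext z phi (L - 1) < l1" and "l1 < phi L"
    and "phi_ext z phi (L + K) < l2" and "L + K < d \<longrightarrow> l2 < phi (L + K + 1)"
    and "f_fun d phi v z l1 = 0" and "f_fun d phi v z l2 = 0"
  shows "g_fun d phi v z l1 \<ge> g_fun d phi v z l2"
proof -
  have phi_mono: "phi i \<le> phi j" if "1 \<le> i" "i \<le> j" "j \<le> d" for i j
    by (rule lift_Suc_mono_le_ivl[where N = "{1..<d}"]) (use assms(4) that in auto)
  have phi_nonneg: "0 \<le> phi m" if "m \<in> {1..d}" for m
    using phi_mono[of 1 m] assms(3) that by auto
  have phi_ext_nonneg: "0 \<le> phi_ext z phi m" if "m \<le> d" for m
    using assms(2) phi_nonneg[of m] that by (auto simp: phi_ext_def)
  have "0 < l1" using phi_ext_nonneg[of "L - 1"] assms(7,9) by linarith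
  moreover have "l1 < l2"
  proof -
    have "phi L \<le> phi (L + K)" using phi_mono assms(6-8) by simp
    then show ?thesis using assms(6,10,11) by (simp add: phi_ext_def)
  qed
  ultimately show ?thesis
    using g_fun_antimono_on_f_fun_roots assms(13,14) phi_nonneg by blast
qed

end
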